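(* Let $k,m\in\mathbb{N}$ with $m<k\le 2m$, $k$ even, and $\gcd(2k+1,2(2m+1))=1$. Let $J_\mu=\{1,\dots,\mu\}$ and define $I_{11}=\{s\in J_m: s=\frac{2n(2m+1)+k-m}{2k+1}\text{ for some }n\in J_{k/2}\}$, $I_{12}=\{s\in J_m: 2m+1-s=\frac{2n(2m+1)+k-m}{2k+1}\text{ for some }n\in\{k/2+1,\dots,k\}\}$, $I_{21}=\{s\in J_m: s=\frac{2n(2m+1)-(k-m)}{2k+1}\text{ for some }n\in J_{k/2}\}$, $I_{22}=\{s\in J_m: 2m+1-s=\frac{2n(2m+1)-(k-m)}{2k+1}\text{ for some }n\in\{k/2+1,\dots,k\}\}$. Then $I_{21}=\{m\}$ and $I_{11}=I_{12}=I_{22}=\emptyset$. *)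

theory Defs
  imports Complex_Main
begin

definition J :: "nat \<Rightarrow> nat set" where "J \<mu> = {1..\<mu>}"

definition I11 :: "nat \<Rightarrow> nat \<Rightarrow> nat set" where
  "I11 k m = {s \<in> J m. \<exists>n \<in> J (k div 2).
     (of_nat s :: rat) = ((of_int :: int \<Rightarrow> rat) (2 * int n * (2 * int m + 1) + int k - int m)) / (of_nat (2*k+1) :: rat)}"

definition I12 :: "nat \<Rightarrow> nat \<Rightarrow> nat set" where
  "I12 k m = {s \<in> J m. \<exists>n \<in> {k div 2 + 1..k}.
     (of_int :: int \<Rightarrow> rat) (2 * int m + 1 - int s) = ((of_int :: int \<Rightarrow> rat) (2 * int n * (2 * int m + 1) + int k - int m)) / (of_nat (2*k+1) :: rat)}"

definition I21 :: "nat \<Rightarrow> nat \<Rightarrow> nat set" where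
  "I21 k m = {s \<in> J m. \<exists>n \<in> J (k div 2).
     (of_nat s :: rat) = ((of_int :: int \<Rightarrow> rat) (2 * int n * (2 * int m + 1) - (int k - int m))) / (of_nat (2*k+1) :: rat)}"

definition I22 :: "nat \<Rightarrow> nat \<Rightarrow> nat set" where
  "I22 k m = {s \<in> J m. \<exists>n \<in> {k div 2 + 1..k}.
     (of_int :: int \<Rightarrow> rat) (2 * int m + 1 - int s) = ((of_int :: int \<Rightarrow> rat) (2 * int n * (2 * int m + 1) - (int k - int m))) / (of_nat (2*k+1) :: rat)}"

end

theory Submission
  imports Defs
begin

text \<open>Put \<open>K = 2k + 1\<close> and \<open>M = 2m + 1\<close>. Since \<open>k - m = kM - mK\<close>, each defining equation
  \<open>xK = 2nM \<plusminus> (k - m)\<close> (with \<open>x\<close> either \<open>s\<close> or \<open>M - s\<close>) turns into an identity \<open>aK = bM\<close> with \<open>a\<close> equal to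
  \<open>s + m\<close>, \<open>m - s\<close>, \<open>s - m\<close>, \<open>m + 1 - s\<close> for \<open>I11\<close>, \<open>I12\<close>, \<open>I21\<close>, \<open>I22\<close> (for \<open>I12\<close> after
  subtracting \<open>MK\<close> from both sides). For \<open>1 \<le> s \<le> m\<close> we have \<open>\<bar>a\<bar> < M\<close>, so coprimality
  of \<open>M\<close> and \<open>K\<close> forces \<open>a = 0\<close>. This rules out \<open>I11\<close> and \<open>I22\<close> outright and leaves only
  \<open>s = m\<close> in \<open>I21\<close> (attained with \<open>n = k/2\<close>) and in \<open>I12\<close>, where it forces \<open>k = 2n - 1\<close>,
  contradicting the parity of \<open>k\<close>.\<close>

lemma of_int_eq_of_int_div_of_nat_iff:
  assumes "0 < K"
  shows "(of_int a :: 'a :: field_char_0) = of_int b / of_nat K \<longleftrightarrow> a * int K = b"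
proof -
  have "(of_int a :: 'a) = of_int b / of_nat K \<longleftrightarrow> of_int a * of_nat K = (of_int b :: 'a)"
    using assms by (simp add: eq_divide_eq)
  also have "\<dots> \<longleftrightarrow> (of_int (a * int K) :: 'a) = of_int b"
    by simp
  finally show ?thesis
    by (simp only: of_int_eq_iff)
qed

lemma coprime_cross_eq_small_imp_zero:
  fixes a b K M :: int
  assumes "coprime M K" and "a * K = b * M" and "\<bar>a\<bar> < M"
  shows "a = 0"
proof (rule ccontr)
  assume "a \<noteq> 0"
  have "M dvd a * K"
    using assms(2) by simp
  with assms(1) have "M dvd a"
    by (simp add: coprime_dvd_mult_left_iff)
  with \<open>a \<noteq> 0\<close> have "\<bar>M\<bar> \<le> \<bar>a\<bar>"
    by (rule dvd_imp_le_int)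
  with assms(3) show False
    by linarith
qed

lemma I11_eq:
  "I11 k m = {s \<in> J m. \<exists>n \<in> J (k div 2).
     (int s + int m) * (2 * int k + 1) = (2 * int n + int k) * (2 * int m + 1)}"
proof -
  have "(of_nat s :: rat) = of_int (2 * int n * (2 * int m + 1) + int k - int m) / of_nat (2*k+1)
    \<longleftrightarrow> int s * int (2*k+1) = 2 * int n * (2 * int m + 1) + int k - int m" for s n
    using of_int_eq_of_int_div_of_nat_iff[where 'a = rat, of "2*k+1" "int s"]
    by (simp only: of_int_of_nat_eq)
  also have "\<dots> s n \<longleftrightarrow> (int s + int m) * (2 * int k + 1) = (2 * int n + int k) * (2 * int m + 1)"
    for s n by (simp add: algebra_simps)
  finally show ?thesis
    unfolding I11_def by simp
qed

lemma I12_eq: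
  "I12 k m = {s \<in> J m. \<exists>n \<in> {k div 2 + 1..k}.
     (int m - int s) * (2 * int k + 1) = (2 * int n - int k - 1) * (2 * int m + 1)}"
proof -
  have "(of_int (2 * int m + 1 - int s) :: rat)
      = of_int (2 * int n * (2 * int m + 1) + int k - int m) / of_nat (2*k+1)
    \<longleftrightarrow> (2 * int m + 1 - int s) * int (2*k+1) = 2 * int n * (2 * int m + 1) + int k - int m"
    for s n by (rule of_int_eq_of_int_div_of_nat_iff) simp
  also have "\<dots> s n \<longleftrightarrow> (int m - int s) * (2 * int k + 1) = (2 * int n - int k - 1) * (2 * int m + 1)"
    for s n by (simp add: algebra_simps)
  finally show ?thesis
    unfolding I12_def by simp
qed

lemma I21_eq:
  "I21 k m = {s \<in> J m. \<exists>n \<in> J (k div 2).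
     (int s - int m) * (2 * int k + 1) = (2 * int n - int k) * (2 * int m + 1)}"
proof -
  have "(of_nat s :: rat) = of_int (2 * int n * (2 * int m + 1) - (int k - int m)) / of_nat (2*k+1)
    \<longleftrightarrow> int s * int (2*k+1) = 2 * int n * (2 * int m + 1) - (int k - int m)" for s n
    using of_int_eq_of_int_div_of_nat_iff[where 'a = rat, of "2*k+1" "int s"]
    by (simp only: of_int_of_nat_eq)
  also have "\<dots> s n \<longleftrightarrow> (int s - int m) * (2 * int k + 1) = (2 * int n - int k) * (2 * int m + 1)"
    for s n by (simp add: algebra_simps)
  finally show ?thesis
    unfolding I21_def by simp
qed

lemma I22_eq:
  "I22 k m = {s \<in> J m. \<exists>n \<in> {k div 2 + 1..k}.
     (int m + 1 - int s) * (2 * int k + 1) = (2 * int n - int k) * (2 * int m + 1)}"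
proof -
  have "(of_int (2 * int m + 1 - int s) :: rat)
      = of_int (2 * int n * (2 * int m + 1) - (int k - int m)) / of_nat (2*k+1)
    \<longleftrightarrow> (2 * int m + 1 - int s) * int (2*k+1) = 2 * int n * (2 * int m + 1) - (int k - int m)"
    for s n by (rule of_int_eq_of_int_div_of_nat_iff) simp
  also have "\<dots> s n \<longleftrightarrow> (int m + 1 - int s) * (2 * int k + 1) = (2 * int n - int k) * (2 * int m + 1)"
    for s n by (simp add: algebra_simps)
  finally show ?thesis
    unfolding I22_def by simp
qed

lemma I11_empty:
  assumes "coprime (2 * int m + 1) (2 * int k + 1)"
  shows "I11 k m = {}"
proof -
  have False
    if s: "s \<in> J m" and eq: "(int s + int m) * (2 * int k + 1) = (2 * int n + int k) * (2 * int m + 1)"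
    for s n
  proof -
    have "int s + int m = 0"
      by (rule coprime_cross_eq_small_imp_zero[OF assms eq]) (use s in \<open>simp add: J_def\<close>)
    with s show False
      by (simp add: J_def)
  qed
  then show ?thesis
    unfolding I11_eq by blast
qed

lemma I12_empty:
  assumes "coprime (2 * int m + 1) (2 * int k + 1)" and "even k"
  shows "I12 k m = {}"
proof -
  have False
    if s: "s \<in> J m" and eq: "(int m - int s) * (2 * int k + 1) = (2 * int n - int k - 1) * (2 * int m + 1)"
    for s n
  proof -
    have "int m - int s = 0"
      by (rule coprime_cross_eq_small_imp_zero[OF assms(1) eq]) (use s in \<open>auto simp add: J_def\<close>)
    with eq have "int k = 2 * int n - 1"
      by simp
    with \<open>even k\<close> show False
      by presburger
  qed
  then show ?thesis
    unfolding I12_eq by blast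
qed

lemma I21_eq_singleton:
  assumes "coprime (2 * int m + 1) (2 * int k + 1)" and "even k" and "0 < k" and "0 < m"
  shows "I21 k m = {m}"
proof
  show "I21 k m \<subseteq> {m}"
  proof
    fix s
    assume "s \<in> I21 k m"
    then obtain n where s: "s \<in> J m"
      and eq: "(int s - int m) * (2 * int k + 1) = (2 * int n - int k) * (2 * int m + 1)"
      unfolding I21_eq by blast
    have "int s - int m = 0"
      by (rule coprime_cross_eq_small_imp_zero[OF assms(1) eq]) (use s in \<open>auto simp add: J_def\<close>)
    then show "s \<in> {m}"
      by simp
  qed
  have "k div 2 \<in> J (k div 2)" and "2 * int (k div 2) - int k = 0"
    using assms(2,3) by (auto simp add: J_def)
  with \<open>0 < m\<close> show "{m} \<subseteq> I21 k m"
    unfolding I21_eq by (auto simp add: J_def)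
qed

lemma I22_empty:
  assumes "coprime (2 * int m + 1) (2 * int k + 1)"
  shows "I22 k m = {}"
proof -
  have False
    if s: "s \<in> J m" and eq: "(int m + 1 - int s) * (2 * int k + 1) = (2 * int n - int k) * (2 * int m + 1)"
    for s n
  proof -
    have "int m + 1 - int s = 0"
      by (rule coprime_cross_eq_small_imp_zero[OF assms eq]) (use s in \<open>auto simp add: J_def\<close>)
    with s show False
      by (simp add: J_def)
  qed
  then show ?thesis
    unfolding I22_eq by blast
qed

theorem lemma3p11:
  fixes k m :: nat
  assumes "m < k" and "k \<le> 2 * m" and "even k"
    and "gcd (2 * k + 1) (2 * (2 * m + 1)) = 1"
  shows "I21 k m = {m} \<and> I11 k m = {} \<and> I12 k m = {} \<and> I22 k m = {}"
proof -
  have "coprime (2 * k + 1) (2 * (2 * m + 1))"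
    using assms(4) by (simp only: coprime_iff_gcd_eq_1)
  then have "coprime (2 * m + 1) (2 * k + 1)"
    by (simp only: coprime_mult_right_iff coprime_commute)
  then have coprime: "coprime (2 * int m + 1) (2 * int k + 1)"
    using coprime_int_iff[of "2 * m + 1" "2 * k + 1"] by (simp add: add.commute)
  have "0 < k" and "0 < m"
    using assms(1,2) by linarith+
  show ?thesis
    using I21_eq_singleton[OF coprime assms(3) \<open>0 < k\<close> \<open>0 < m\<close>]
      I11_empty[OF coprime] I12_empty[OF coprime assms(3)] I22_empty[OF coprime]
    by blast
qed

end
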